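(* Let $J\subseteq I$ and let $A$ be a $J$-antichain in $R^+$. Then $A$ is an abelian $J$-antichain if and only if both of the following hold: (1) for all $\alpha,\beta\in A$ with $\alpha\ne\beta$ there exists $i\in I$ with $d_i(\alpha)+d_i(\beta)>d_i(\theta)$; (2) for every $\alpha\in A$ there exists $i\in I$ with $2d_i(\alpha)>d_i(\theta)$.
   Context: $\mathfrak g$ is a complex simple Lie algebra of rank $n$ with root system $R$, $I=\{1,\dots,n\}$, simple roots $\{\alpha_i\}_{i\in I}$, $Q^+$ their $\mathbb Z_{\ge0}$-span, $R^+=R\cap Q^+$, $\theta$ the highest root. For $\eta$ in the root lattice write $\eta=\sum_i d_i(\eta)\alpha_i$. Partial order: $\lambda\le\mu$ iff $\mu-\lambda\in Q^+$. For $J\subseteq I$, $R^+(J)=\{\alpha\in R^+: d_i(\alpha)=0\ \forall i\notin J\}$. A $J$-antichain is a subset $A\subseteq R^+$ with $A\cap R^+(J)=\emptyset$, distinct elements pairwise incomparable, and $\alpha-\alpha_j\notin R$ for all $\alpha\in A$, $j\in J$. $\Phi(A)=\{\alpha\in R^+:\alpha\ge\beta\text{ for some }\beta\in A\}$. A $J$-antichain $A$ is abelian if for all $\beta_1,\beta_2\in\Phi(A)$ (not necessarily distinct) $\beta_1+\beta_2\notin R$. *)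

theory Defs
  imports "HOL-Analysis.Analysis"
begin

text \<open>An (irreducible, reduced, crystallographic) root system in a Euclidean space.
  Roots of a complex simple Lie algebra of rank n are exactly such root systems
  in a Euclidean space of dimension n.\<close>

definition root_system :: "'a::euclidean_space set \<Rightarrow> bool" where
  "root_system R \<longleftrightarrow>
     finite R \<and> 0 \<notin> R \<and> span R = UNIV \<and>
     (\<forall>a\<in>R. \<forall>b\<in>R. b - (2 * (b \<bullet> a) / (a \<bullet> a)) *\<^sub>R a \<in> R) \<and>
     (\<forall>a\<in>R. \<forall>b\<in>R. 2 * (b \<bullet> a) / (a \<bullet> a) \<in> \<int>) \<and>
     (\<forall>a\<in>R. \<forall>c::real. c *\<^sub>R a \<in> R \<longrightarrow> c = 1 \<or> c = -1)"

definition irreducible_root_system :: "'a::euclidean_space set \<Rightarrow> bool" where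
  "irreducible_root_system R \<longleftrightarrow> root_system R \<and>
     \<not> (\<exists>R1 R2. R = R1 \<union> R2 \<and> R1 \<noteq> {} \<and> R2 \<noteq> {} \<and>
            (\<forall>a\<in>R1. \<forall>b\<in>R2. a \<bullet> b = 0))"

definition simple_roots :: "'a::euclidean_space set \<Rightarrow> nat \<Rightarrow> (nat \<Rightarrow> 'a) \<Rightarrow> bool" where
  "simple_roots R n alpha \<longleftrightarrow>
     alpha ` {1..n} \<subseteq> R \<and> inj_on alpha {1..n} \<and> independent (alpha ` {1..n}) \<and>
     (\<forall>b\<in>R. \<exists>c::nat \<Rightarrow> int. b = (\<Sum>j\<in>{1..n}. of_int (c j) *\<^sub>R alpha j) \<and>
        ((\<forall>j\<in>{1..n}. c j \<ge> 0) \<or> (\<forall>j\<in>{1..n}. c j \<le> 0)))"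

definition dcoef :: "nat \<Rightarrow> (nat \<Rightarrow> 'a::euclidean_space) \<Rightarrow> nat \<Rightarrow> 'a \<Rightarrow> int" where
  "dcoef n alpha i eta = (THE k. \<exists>c::nat \<Rightarrow> int.
      eta = (\<Sum>j\<in>{1..n}. of_int (c j) *\<^sub>R alpha j) \<and> c i = k)"

definition Qplus :: "nat \<Rightarrow> (nat \<Rightarrow> 'a::euclidean_space) \<Rightarrow> 'a set" where
  "Qplus n alpha = {eta. \<exists>c::nat \<Rightarrow> nat. eta = (\<Sum>j\<in>{1..n}. of_nat (c j) *\<^sub>R alpha j)}"

definition rle :: "nat \<Rightarrow> (nat \<Rightarrow> 'a::euclidean_space) \<Rightarrow> 'a \<Rightarrow> 'a \<Rightarrow> bool" where
  "rle n alpha l m \<longleftrightarrow> m - l \<in> Qplus n alpha"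

definition pos_roots :: "'a::euclidean_space set \<Rightarrow> nat \<Rightarrow> (nat \<Rightarrow> 'a) \<Rightarrow> 'a set" where
  "pos_roots R n alpha = R \<inter> Qplus n alpha"

definition highest_root :: "'a::euclidean_space set \<Rightarrow> nat \<Rightarrow> (nat \<Rightarrow> 'a) \<Rightarrow> 'a" where
  "highest_root R n alpha = (THE t. t \<in> pos_roots R n alpha \<and>
      (\<forall>b\<in>pos_roots R n alpha. rle n alpha b t))"

definition pos_roots_J :: "'a::euclidean_space set \<Rightarrow> nat \<Rightarrow> (nat \<Rightarrow> 'a) \<Rightarrow> nat set \<Rightarrow> 'a set" where
  "pos_roots_J R n alpha J = {a \<in> pos_roots R n alpha. \<forall>i\<in>{1..n}. i \<notin> J \<longrightarrow> dcoef n alpha i a = 0}"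

definition J_antichain :: "'a::euclidean_space set \<Rightarrow> nat \<Rightarrow> (nat \<Rightarrow> 'a) \<Rightarrow> nat set \<Rightarrow> 'a set \<Rightarrow> bool" where
  "J_antichain R n alpha J A \<longleftrightarrow>
     A \<subseteq> pos_roots R n alpha \<and> A \<inter> pos_roots_J R n alpha J = {} \<and>
     (\<forall>a\<in>A. \<forall>b\<in>A. a \<noteq> b \<longrightarrow> \<not> rle n alpha a b) \<and>
     (\<forall>a\<in>A. \<forall>j\<in>J. a - alpha j \<notin> R)"

definition upper_closure :: "'a::euclidean_space set \<Rightarrow> nat \<Rightarrow> (nat \<Rightarrow> 'a) \<Rightarrow> 'a set \<Rightarrow> 'a set" where
  "upper_closure R n alpha A = {a \<in> pos_roots R n alpha. \<exists>b\<in>A. rle n alpha b a}"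

definition abelian_J_antichain :: "'a::euclidean_space set \<Rightarrow> nat \<Rightarrow> (nat \<Rightarrow> 'a) \<Rightarrow> nat set \<Rightarrow> 'a set \<Rightarrow> bool" where
  "abelian_J_antichain R n alpha J A \<longleftrightarrow> J_antichain R n alpha J A \<and>
     (\<forall>b1\<in>upper_closure R n alpha A. \<forall>b2\<in>upper_closure R n alpha A. b1 + b2 \<notin> R)"

end

theory Submission
  imports Defs
begin

(* Everything is computed in coordinates with respect to the simple roots: the root lattice
   order becomes the coordinatewise order and d_i becomes the i-th coordinate.  The heart of the
   proof is a statement about an arbitrary positive root theta (no irreducibility needed):
   if b1 + b2 <= theta for positive roots b1, b2, then b1, b2 can be raised inside the positive
   roots to c1, c2 with c1 + c2 a root.  It is proved by induction on the height of the gap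
   theta - b1 - b2, the step being a Cartan-integer argument (lemma gap_obtuse_simple_root).
   Irreducibility enters only to show that the highest root dominates every positive root:
   a dominant positive root has full support, and two "locally highest" roots coincide.
   With this, A is abelian iff no sum a + b (a, b in A, possibly equal) lies below theta, which
   in coefficients is exactly conditions (1) and (2). *)

lemma real_measure_induct [consumes 1, case_names nonneg step]:
  fixes f :: "'b \<Rightarrow> real"
  assumes "Q x"
    and nonneg: "\<And>x. Q x \<Longrightarrow> f x \<ge> 0"
    and step: "\<And>x. Q x \<Longrightarrow> (\<And>y. Q y \<Longrightarrow> f y \<le> f x - 1 \<Longrightarrow> P y) \<Longrightarrow> P x"
  shows "P x"
  using assms(1)
proof (induction "nat \<lceil>f x\<rceil>" arbitrary: x rule: less_induct)
  case less
  show ?case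
  proof (rule step[OF less.prems])
    fix y assume y: "Q y" "f y \<le> f x - 1"
    have "nat \<lceil>f y\<rceil> < nat \<lceil>f x\<rceil>"
      using nonneg[OF y(1)] y(2) by linarith
    thus "P y" using less.hyps y(1) by blast
  qed
qed

locale based_root_system =
  fixes R :: "'a::euclidean_space set" and alpha :: "nat \<Rightarrow> 'a" and n :: nat
  assumes n_def: "n = DIM('a)"
    and root_system: "root_system R"
    and simple: "simple_roots R n alpha"
begin

abbreviation "I \<equiv> {1..n}"

definition lincomb :: "(nat \<Rightarrow> real) \<Rightarrow> 'a" where
  "lincomb c = (\<Sum>j\<in>I. c j *\<^sub>R alpha j)"

lemma alpha_in_R: "j \<in> I \<Longrightarrow> alpha j \<in> R"
  using simple unfolding simple_roots_def by auto

lemma alpha_inj: "inj_on alpha I"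
  using simple unfolding simple_roots_def by auto

lemma alpha_independent: "independent (alpha ` I)"
  using simple unfolding simple_roots_def by auto

lemma lincomb_unique:
  assumes "lincomb c = lincomb d" "j \<in> I"
  shows "c j = d j"
proof (rule ccontr)
  assume ne: "c j \<noteq> d j"
  define u where "u v = c (the_inv_into I alpha v) - d (the_inv_into I alpha v)" for v
  have "(\<Sum>v\<in>alpha ` I. u v *\<^sub>R v) = (\<Sum>i\<in>I. u (alpha i) *\<^sub>R alpha i)"
    by (rule sum.reindex[OF alpha_inj, unfolded comp_def])
  also have "\<dots> = (\<Sum>i\<in>I. (c i - d i) *\<^sub>R alpha i)"
  proof (rule sum.cong)
    fix i assume "i \<in> I"
    then show "u (alpha i) *\<^sub>R alpha i = (c i - d i) *\<^sub>R alpha i"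
      using the_inv_into_f_f[OF alpha_inj, of i] by (simp add: u_def)
  qed simp
  also have "\<dots> = lincomb c - lincomb d"
    by (simp add: lincomb_def scaleR_diff_left sum_subtractf)
  finally have "(\<Sum>v\<in>alpha ` I. u v *\<^sub>R v) = 0" using assms by simp
  moreover have "u (alpha j) \<noteq> 0"
    using ne assms the_inv_into_f_f[OF alpha_inj, of j] by (simp add: u_def)
  ultimately have "dependent (alpha ` I)"
    using assms(2) unfolding dependent_finite[OF finite_imageI[OF finite_atLeastAtMost]]
    by blast
  thus False using alpha_independent by simp
qed

text \<open>Coordinates exist: n = dim independent vectors span the space.\<close>
lemma lincomb_exists: "\<exists>c. x = lincomb c"
proof -
  have "card (alpha ` I) = n" using card_image[OF alpha_inj] by simp
  hence "span (alpha ` I) = UNIV"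
    using card_ge_dim_independent[of "alpha ` I" UNIV] alpha_independent n_def
    by (auto simp: dim_UNIV)
  then obtain u where "x = (\<Sum>v\<in>alpha ` I. u v *\<^sub>R v)"
    using span_finite[of "alpha ` I"] by auto
  also have "\<dots> = lincomb (\<lambda>i. u (alpha i))"
    unfolding lincomb_def by (rule sum.reindex[OF alpha_inj, unfolded comp_def])
  finally show ?thesis by blast
qed

definition coord :: "'a \<Rightarrow> nat \<Rightarrow> real" where
  "coord x = (SOME c. x = lincomb c)"

lemma lincomb_coord: "lincomb (coord x) = x"
  unfolding coord_def using someI_ex[OF lincomb_exists[of x]] by simp

lemma coord_eqI: "x = lincomb c \<Longrightarrow> j \<in> I \<Longrightarrow> coord x j = c j"
  using lincomb_unique[of "coord x" c j] lincomb_coord by simp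

lemma vec_eqI:
  assumes "\<And>j. j \<in> I \<Longrightarrow> coord x j = coord y j" shows "x = y"
proof -
  have "lincomb (coord x) = lincomb (coord y)"
    unfolding lincomb_def by (rule sum.cong) (simp_all add: assms)
  thus ?thesis by (simp add: lincomb_coord)
qed

lemma coord_add: "j \<in> I \<Longrightarrow> coord (x + y) j = coord x j + coord y j"
proof (rule coord_eqI)
  show "x + y = lincomb (\<lambda>i. coord x i + coord y i)"
    using lincomb_coord[of x] lincomb_coord[of y]
    by (simp add: lincomb_def scaleR_add_left sum.distrib)
qed

lemma coord_scale: "j \<in> I \<Longrightarrow> coord (r *\<^sub>R x) j = r * coord x j"
proof (rule coord_eqI)
  have "r *\<^sub>R x = r *\<^sub>R lincomb (coord x)" by (simp add: lincomb_coord)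
  thus "r *\<^sub>R x = lincomb (\<lambda>i. r * coord x i)" by (simp add: lincomb_def scaleR_sum_right)
qed

lemma coord_minus: "j \<in> I \<Longrightarrow> coord (- x) j = - coord x j"
  using coord_scale[of j "-1" x] by simp

lemma coord_diff: "j \<in> I \<Longrightarrow> coord (x - y) j = coord x j - coord y j"
  using coord_add[of j x "-y"] coord_minus[of j y] by simp

lemma coord_zero: "j \<in> I \<Longrightarrow> coord 0 j = 0"
  using coord_scale[of j 0 0] by simp

lemma coord_alpha:
  assumes "j \<in> I" "i \<in> I"
  shows "coord (alpha i) j = (if i = j then 1 else 0)"
proof (rule coord_eqI[OF _ assms(1)])
  have "lincomb (\<lambda>k. if i = k then 1 else 0) = (\<Sum>k\<in>I. if i = k then alpha k else 0)"
    unfolding lincomb_def by (rule sum.cong) auto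
  also have "\<dots> = alpha i" using assms(2) by simp
  finally show "alpha i = lincomb (\<lambda>k. if i = k then 1 else 0)" by simp
qed

lemma coord_nonzero:
  assumes "x \<noteq> 0" shows "\<exists>j\<in>I. coord x j \<noteq> 0"
proof (rule ccontr)
  assume "\<not> (\<exists>j\<in>I. coord x j \<noteq> 0)"
  hence "x = 0" by (intro vec_eqI) (simp add: coord_zero)
  thus False using assms by simp
qed

lemma inner_coord: "x \<bullet> y = (\<Sum>i\<in>I. coord x i * (alpha i \<bullet> y))"
proof -
  have "x \<bullet> y = lincomb (coord x) \<bullet> y" by (simp add: lincomb_coord)
  thus ?thesis by (simp add: lincomb_def inner_sum_left)
qed

lemma inner_pos_witness:
  assumes "x \<bullet> y > 0"
  obtains i where "i \<in> I" "coord x i * (alpha i \<bullet> y) > 0"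
proof -
  have "(\<Sum>i\<in>I. coord x i * (alpha i \<bullet> y)) > 0" using assms inner_coord[of x y] by linarith
  then obtain i where "i \<in> I" "coord x i * (alpha i \<bullet> y) > 0"
    using sum_nonpos[of I "\<lambda>i. coord x i * (alpha i \<bullet> y)"] by (meson not_le)
  thus thesis by (rule that)
qed

lemma finite_R: "finite R"
  using root_system unfolding root_system_def by auto

lemma zero_notin_R: "0 \<notin> R"
  using root_system unfolding root_system_def by auto

lemma reflection_in_R: "a \<in> R \<Longrightarrow> b \<in> R \<Longrightarrow> b - (2 * (b \<bullet> a) / (a \<bullet> a)) *\<^sub>R a \<in> R"
  using root_system unfolding root_system_def by auto

lemma cartan_integer: "a \<in> R \<Longrightarrow> b \<in> R \<Longrightarrow> 2 * (b \<bullet> a) / (a \<bullet> a) \<in> \<int>"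
  using root_system unfolding root_system_def by auto

lemma reduced: "a \<in> R \<Longrightarrow> c *\<^sub>R a \<in> R \<Longrightarrow> c = 1 \<or> c = -1"
  using root_system unfolding root_system_def by auto

lemma root_norm_pos: "a \<in> R \<Longrightarrow> a \<bullet> a > 0"
  using zero_notin_R by (metis inner_gt_zero_iff)

lemma uminus_in_R:
  assumes a: "a \<in> R" shows "- a \<in> R"
proof -
  have "2 * (a \<bullet> a) / (a \<bullet> a) = 2" using root_norm_pos[OF a] by simp
  hence "a - (2 * (a \<bullet> a) / (a \<bullet> a)) *\<^sub>R a = - a" by (simp add: scaleR_2)
  thus ?thesis using reflection_in_R[OF a a] by simp
qed

text \<open>For two non-proportional roots the product of the two Cartan integers is below 4;
  this is the strict Cauchy--Schwarz inequality, using that R is reduced.\<close>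
lemma cartan_product_lt4:
  assumes a: "a \<in> R" and b: "b \<in> R" and ne: "b \<noteq> a" "b \<noteq> - a"
  shows "(2 * (a \<bullet> b) / (a \<bullet> a)) * (2 * (a \<bullet> b) / (b \<bullet> b)) < 4"
proof -
  have na: "norm a > 0" using a zero_notin_R by auto
  have "\<bar>a \<bullet> b\<bar> \<noteq> norm a * norm b"
  proof
    assume "\<bar>a \<bullet> b\<bar> = norm a * norm b"
    hence "norm a *\<^sub>R b = norm b *\<^sub>R a \<or> norm a *\<^sub>R b = - norm b *\<^sub>R a"
      using norm_cauchy_schwarz_abs_eq by blast
    then obtain s where s: "norm a *\<^sub>R b = s *\<^sub>R a" by (metis scaleR_minus_left)
    have "b = inverse (norm a) *\<^sub>R (norm a *\<^sub>R b)" using na by simp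
    also have "\<dots> = (s / norm a) *\<^sub>R a" by (simp add: s divide_inverse_commute)
    finally have b_eq: "b = (s / norm a) *\<^sub>R a" .
    have "(s / norm a) *\<^sub>R a \<in> R" using b b_eq by simp
    hence "s / norm a = 1 \<or> s / norm a = -1" by (rule reduced[OF a])
    thus False using ne b_eq by auto
  qed
  hence "\<bar>a \<bullet> b\<bar> < norm a * norm b" using Cauchy_Schwarz_ineq2[of a b] by linarith
  hence "\<bar>a \<bullet> b\<bar>^2 < (norm a * norm b)^2"
    by (meson abs_ge_zero power_strict_mono zero_less_numeral)
  hence "(a \<bullet> b)^2 < (a \<bullet> a) * (b \<bullet> b)"
    by (simp add: power_mult_distrib power2_norm_eq_inner)
  moreover have "a \<bullet> a > 0" "b \<bullet> b > 0" using root_norm_pos a b by auto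
  ultimately have lt1: "(a \<bullet> b)^2 / ((a \<bullet> a) * (b \<bullet> b)) < 1" by simp
  have "(2 * (a \<bullet> b) / (a \<bullet> a)) * (2 * (a \<bullet> b) / (b \<bullet> b))
      = 4 * ((a \<bullet> b)^2 / ((a \<bullet> a) * (b \<bullet> b)))"
    by (simp add: power2_eq_square)
  thus ?thesis using lt1 by linarith
qed

lemma obtuse_sum_in_R:
  assumes a: "a \<in> R" and b: "b \<in> R" and neg: "a \<bullet> b < 0" and ne: "b \<noteq> - a"
  shows "a + b \<in> R"
proof -
  have pa: "a \<bullet> a > 0" "b \<bullet> b > 0" using root_norm_pos a b by auto
  have "b \<noteq> a"
  proof
    assume "b = a"
    hence "a \<bullet> b = a \<bullet> a" by simp
    thus False using neg pa(1) by linarith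
  qed
  obtain k where k: "2 * (b \<bullet> a) / (a \<bullet> a) = of_int k"
    using cartan_integer[OF a b] Ints_cases by metis
  obtain l where l: "2 * (a \<bullet> b) / (b \<bullet> b) = of_int l"
    using cartan_integer[OF b a] Ints_cases by metis
  have "2 * (b \<bullet> a) < 0" "2 * (a \<bullet> b) < 0" using neg by (simp_all add: inner_commute)
  hence "2 * (b \<bullet> a) / (a \<bullet> a) < 0" "2 * (a \<bullet> b) / (b \<bullet> b) < 0"
    using pa by (simp_all only: divide_neg_pos)
  hence "of_int k < (0::real)" "of_int l < (0::real)" using k l by simp_all
  hence kl: "k \<le> -1" "l \<le> -1" by simp_all
  have "2 * (a \<bullet> b) / (a \<bullet> a) = of_int k" using k by (simp add: inner_commute)
  hence "of_int k * of_int l = (2 * (a \<bullet> b) / (a \<bullet> a)) * (2 * (a \<bullet> b) / (b \<bullet> b))"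
    using l by simp
  hence "of_int (k * l) < (4::real)" using cartan_product_lt4[OF a b \<open>b \<noteq> a\<close> ne] by simp
  hence "k * l < 4" by linarith
  hence "k = -1 \<or> l = -1" using kl mult_mono[of 2 "-k" 2 "-l"] by fastforce
  thus ?thesis
  proof
    assume "k = -1"
    thus ?thesis using reflection_in_R[OF a b] k by (simp add: add.commute)
  next
    assume "l = -1"
    thus ?thesis using reflection_in_R[OF b a] l by simp
  qed
qed

lemma acute_diff_in_R:
  assumes "a \<in> R" "b \<in> R" "a \<bullet> b > 0" "a \<noteq> b"
  shows "a - b \<in> R"
  using obtuse_sum_in_R[OF assms(1) uminus_in_R[OF assms(2)]] assms(3,4) by simp

lemma double_string_in_R:
  assumes "a \<in> R" "b \<in> R" "b \<bullet> a = a \<bullet> a"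
  shows "b - 2 *\<^sub>R a \<in> R"
proof -
  have "2 * (b \<bullet> a) / (a \<bullet> a) = 2" using assms(3) root_norm_pos[OF assms(1)] by simp
  thus ?thesis using reflection_in_R[OF assms(1,2)] by simp
qed

lemma large_inner_cartan_one:
  assumes th: "th \<in> R" and b: "b \<in> R" and ge: "th \<bullet> b \<ge> b \<bullet> b"
    and ne: "b \<noteq> th" "b \<noteq> - th"
  shows "2 * (th \<bullet> b) = th \<bullet> th"
proof -
  have pb: "b \<bullet> b > 0" and pt: "th \<bullet> th > 0" using root_norm_pos th b by auto
  obtain k where k: "2 * (th \<bullet> b) / (th \<bullet> th) = of_int k"
    using cartan_integer[OF th b] Ints_cases by (metis inner_commute)
  have q: "2 * (th \<bullet> b) / (b \<bullet> b) \<ge> 2" using ge pb by (simp add: le_divide_eq)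
  have "th \<bullet> b > 0" using ge pb by linarith
  hence p0: "2 * (th \<bullet> b) / (th \<bullet> th) > 0" using pt by simp
  have "(2 * (th \<bullet> b) / (th \<bullet> th)) * 2 \<le> (2 * (th \<bullet> b) / (th \<bullet> th)) * (2 * (th \<bullet> b) / (b \<bullet> b))"
    by (rule mult_left_mono[OF q]) (use p0 in linarith)
  also have "\<dots> < 4" using cartan_product_lt4[OF th b ne] .
  finally have "k = 1" using k p0 by simp
  thus ?thesis using k pt by (simp add: divide_eq_1_iff)
qed

lemma root_coords:
  assumes "b \<in> R"
  obtains c :: "nat \<Rightarrow> int" where "\<forall>j\<in>I. coord b j = of_int (c j)"
    and "(\<forall>j\<in>I. c j \<ge> 0) \<or> (\<forall>j\<in>I. c j \<le> 0)"
proof -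
  obtain c :: "nat \<Rightarrow> int" where c: "b = (\<Sum>j\<in>I. of_int (c j) *\<^sub>R alpha j)"
    and sign: "(\<forall>j\<in>I. c j \<ge> 0) \<or> (\<forall>j\<in>I. c j \<le> 0)"
    using simple assms unfolding simple_roots_def by blast
  have "b = lincomb (\<lambda>j. of_int (c j))" using c by (simp add: lincomb_def)
  hence "\<forall>j\<in>I. coord b j = of_int (c j)" using coord_eqI by blast
  thus thesis using sign that by blast
qed

definition lattice :: "'a \<Rightarrow> bool" where
  "lattice x \<longleftrightarrow> (\<forall>j\<in>I. coord x j \<in> \<int>)"

lemma root_lattice: "b \<in> R \<Longrightarrow> lattice b"
  unfolding lattice_def by (metis root_coords Ints_of_int)

lemma lattice_add: "lattice x \<Longrightarrow> lattice y \<Longrightarrow> lattice (x + y)"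
  by (simp add: lattice_def coord_add)

lemma lattice_diff: "lattice x \<Longrightarrow> lattice y \<Longrightarrow> lattice (x - y)"
  by (simp add: lattice_def coord_diff)

lemma root_sign: "b \<in> R \<Longrightarrow> (\<forall>j\<in>I. coord b j \<ge> 0) \<or> (\<forall>j\<in>I. coord b j \<le> 0)"
  by (metis root_coords of_int_0_le_iff of_int_le_0_iff)

definition posroot :: "'a \<Rightarrow> bool" where
  "posroot x \<longleftrightarrow> x \<in> R \<and> (\<forall>j\<in>I. coord x j \<ge> 0)"

definition coord_le :: "'a \<Rightarrow> 'a \<Rightarrow> bool" where
  "coord_le x y \<longleftrightarrow> (\<forall>j\<in>I. coord x j \<le> coord y j)"

lemma coord_le_refl: "coord_le x x"
  by (simp add: coord_le_def)

lemma coord_le_trans: "coord_le x y \<Longrightarrow> coord_le y z \<Longrightarrow> coord_le x z"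
  unfolding coord_le_def by (meson order_trans)

lemma coord_le_add: "coord_le a b \<Longrightarrow> coord_le c d \<Longrightarrow> coord_le (a + c) (b + d)"
  by (simp add: coord_le_def coord_add add_mono)

lemma coord_le_add_alpha: "i \<in> I \<Longrightarrow> coord_le x (x + alpha i)"
  by (simp add: coord_le_def coord_add coord_alpha)

lemma coord_le_add_alpha_below:
  assumes "coord_le x y" "lattice (y - x)" "i \<in> I" "coord (y - x) i > 0"
  shows "coord_le (x + alpha i) y"
proof -
  have "coord (y - x) i \<in> \<int>" using assms(2,3) by (simp add: lattice_def)
  then obtain z where "coord (y - x) i = of_int z" by (auto elim: Ints_cases)
  hence "coord x i + 1 \<le> coord y i" using assms(3,4) by (simp add: coord_diff)
  thus ?thesis using assms(1,3) by (auto simp: coord_le_def coord_add coord_alpha)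
qed

lemma posroot_in_R: "posroot x \<Longrightarrow> x \<in> R"
  by (simp add: posroot_def)

lemma posroot_nonzero: "posroot x \<Longrightarrow> x \<noteq> 0"
  using zero_notin_R posroot_def by auto

lemma posroot_or_negroot: "b \<in> R \<Longrightarrow> posroot b \<or> posroot (- b)"
  using root_sign[of b] uminus_in_R[of b] by (auto simp: posroot_def coord_minus)

lemma posroot_not_opposite: "posroot x \<Longrightarrow> posroot y \<Longrightarrow> x \<noteq> - y"
proof
  assume x: "posroot x" and y: "posroot y" and e: "x = - y"
  have "\<forall>j\<in>I. coord x j = 0" using x y e unfolding posroot_def by (force simp: coord_minus)
  hence "x = 0" using vec_eqI[of x 0] coord_zero by auto
  thus False using posroot_nonzero x by blast
qed

lemma posroot_alpha: "i \<in> I \<Longrightarrow> posroot (alpha i)"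
  using alpha_in_R by (simp add: posroot_def coord_alpha)

lemma posroot_add: "posroot x \<Longrightarrow> posroot y \<Longrightarrow> x + y \<in> R \<Longrightarrow> posroot (x + y)"
  by (simp add: posroot_def coord_add)

lemma posroot_add_alpha:
  assumes b: "posroot b" and i: "i \<in> I" and neg: "b \<bullet> alpha i < 0"
  shows "posroot (b + alpha i)"
proof -
  have "alpha i \<noteq> - b" using posroot_not_opposite[OF posroot_alpha[OF i] b] .
  hence "b + alpha i \<in> R"
    using obtuse_sum_in_R[OF posroot_in_R[OF b] alpha_in_R[OF i] neg] by blast
  thus ?thesis by (rule posroot_add[OF b posroot_alpha[OF i]])
qed

text \<open>Distinct simple roots form non-acute angles, since their difference is not a root.\<close>
lemma simple_inner_nonpos:
  assumes i: "i \<in> I" and j: "j \<in> I" and ij: "i \<noteq> j"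
  shows "alpha i \<bullet> alpha j \<le> 0"
proof (rule ccontr)
  assume "\<not> alpha i \<bullet> alpha j \<le> 0"
  moreover have "alpha i \<noteq> alpha j" using alpha_inj i j ij by (meson inj_on_contraD)
  ultimately have r: "alpha i - alpha j \<in> R"
    using acute_diff_in_R[OF alpha_in_R[OF i] alpha_in_R[OF j]] by simp
  have "coord (alpha i - alpha j) i = 1" "coord (alpha i - alpha j) j = -1"
    using i j ij by (auto simp: coord_diff coord_alpha)
  thus False using root_sign[OF r] i j by force
qed

definition height :: "'a \<Rightarrow> real" where
  "height x = (\<Sum>j\<in>I. coord x j)"

lemma height_add: "height (x + y) = height x + height y"
  by (simp add: height_def coord_add sum.distrib)

lemma height_diff: "height (x - y) = height x - height y"
  by (simp add: height_def coord_diff sum_subtractf)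

lemma height_alpha: "i \<in> I \<Longrightarrow> height (alpha i) = 1"
  by (simp add: height_def coord_alpha)

lemma height_nonneg: "\<forall>j\<in>I. coord x j \<ge> 0 \<Longrightarrow> height x \<ge> 0"
  unfolding height_def by (rule sum_nonneg) auto

lemma height_pos:
  assumes "\<forall>j\<in>I. coord x j \<ge> 0" "x \<noteq> 0"
  shows "height x > 0"
proof -
  obtain j where j: "j \<in> I" "coord x j \<noteq> 0" using coord_nonzero[OF assms(2)] by blast
  have "coord x j \<le> height x" unfolding height_def
    by (rule member_le_sum) (use assms j in auto)
  thus ?thesis using j assms(1) by force
qed

lemma Qplus_iff: "x \<in> Qplus n alpha \<longleftrightarrow> lattice x \<and> (\<forall>j\<in>I. coord x j \<ge> 0)"
proof
  assume "x \<in> Qplus n alpha"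
  then obtain c :: "nat \<Rightarrow> nat" where "x = (\<Sum>j\<in>I. of_nat (c j) *\<^sub>R alpha j)"
    unfolding Qplus_def by blast
  hence "x = lincomb (\<lambda>j. of_nat (c j))" by (simp add: lincomb_def)
  hence "\<forall>j\<in>I. coord x j = of_nat (c j)" using coord_eqI by blast
  thus "lattice x \<and> (\<forall>j\<in>I. coord x j \<ge> 0)" unfolding lattice_def by (metis Ints_of_nat of_nat_0_le_iff)
next
  assume h: "lattice x \<and> (\<forall>j\<in>I. coord x j \<ge> 0)"
  have c: "of_nat (nat \<lfloor>coord x j\<rfloor>) = coord x j" if "j \<in> I" for j
    using h that unfolding lattice_def by simp
  have "x = lincomb (coord x)" by (simp add: lincomb_coord)
  also have "\<dots> = (\<Sum>j\<in>I. of_nat (nat \<lfloor>coord x j\<rfloor>) *\<^sub>R alpha j)" unfolding lincomb_def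
    by (rule sum.cong) (simp_all add: c)
  finally show "x \<in> Qplus n alpha"
    unfolding Qplus_def by (intro CollectI exI[where x="\<lambda>j. nat \<lfloor>coord x j\<rfloor>"])
qed

lemma rle_iff: "lattice x \<Longrightarrow> lattice y \<Longrightarrow> rle n alpha x y \<longleftrightarrow> coord_le x y"
  unfolding rle_def Qplus_iff coord_le_def using lattice_diff by (auto simp: coord_diff)

lemma pos_roots_iff: "x \<in> pos_roots R n alpha \<longleftrightarrow> posroot x"
  by (auto simp: pos_roots_def posroot_def Qplus_iff root_lattice)

lemma dcoef_coord:
  assumes "lattice x" "j \<in> I"
  shows "of_int (dcoef n alpha j x) = coord x j"
proof -
  have "dcoef n alpha j x = \<lfloor>coord x j\<rfloor>"
    unfolding dcoef_def
  proof (rule the_equality)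
    have "x = lincomb (coord x)" by (simp add: lincomb_coord)
    also have "\<dots> = (\<Sum>i\<in>I. of_int \<lfloor>coord x i\<rfloor> *\<^sub>R alpha i)" unfolding lincomb_def
      by (rule sum.cong) (use assms in \<open>simp_all add: lattice_def\<close>)
    finally show "\<exists>c. x = (\<Sum>i\<in>I. of_int (c i) *\<^sub>R alpha i) \<and> c j = \<lfloor>coord x j\<rfloor>"
      by (intro exI[where x="\<lambda>i. \<lfloor>coord x i\<rfloor>"]) simp
  next
    fix k assume "\<exists>c. x = (\<Sum>i\<in>I. of_int (c i) *\<^sub>R alpha i) \<and> c j = k"
    then obtain c where c: "x = lincomb (\<lambda>i. of_int (c i))" "c j = k"
      by (auto simp: lincomb_def)
    thus "k = \<lfloor>coord x j\<rfloor>" using coord_eqI assms(2) by auto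
  qed
  thus ?thesis using assms unfolding lattice_def by simp
qed

lemma dcoef_sum_exceeds_iff:
  assumes "lattice a" "lattice b" "lattice c"
  shows "(\<exists>i\<in>I. dcoef n alpha i a + dcoef n alpha i b > dcoef n alpha i c) \<longleftrightarrow> \<not> coord_le (a + b) c"
proof -
  have "dcoef n alpha i a + dcoef n alpha i b > dcoef n alpha i c \<longleftrightarrow> coord (a + b) i > coord c i"
    if "i \<in> I" for i
    using dcoef_coord[OF assms(1) that] dcoef_coord[OF assms(2) that] dcoef_coord[OF assms(3) that]
      that coord_add
    by (metis of_int_add of_int_less_iff)
  thus ?thesis by (auto simp: coord_le_def not_le)
qed

lemma inner_nonneg_by_support:
  assumes "\<forall>i\<in>I. coord g i \<ge> 0" "\<forall>i\<in>I. coord g i > 0 \<longrightarrow> alpha i \<bullet> y \<ge> 0"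
  shows "g \<bullet> y \<ge> 0"
  unfolding inner_coord[of g]
proof (rule sum_nonneg)
  fix i assume i: "i \<in> I"
  show "coord g i * (alpha i \<bullet> y) \<ge> 0"
  proof (cases "coord g i > 0")
    case True thus ?thesis using assms(2) i by simp
  next
    case False hence "coord g i = 0" using assms(1) i by force
    thus ?thesis by simp
  qed
qed

lemma posroot_plus_nonneg_nonzero:
  assumes "posroot b" "\<forall>j\<in>I. coord g j \<ge> 0"
  shows "b + g \<noteq> 0"
proof
  assume "b + g = 0"
  hence "\<forall>j\<in>I. coord b j + coord g j = 0" using coord_add coord_zero by metis
  hence "\<forall>j\<in>I. coord b j = 0" using assms unfolding posroot_def by (metis add_nonneg_eq_0_iff)
  hence "b = 0" using vec_eqI[of b 0] coord_zero by auto
  thus False using posroot_nonzero[OF assms(1)] by simp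
qed

text \<open>Otherwise the gap g pairs nonnegatively with b1, b2 and b1 \<bullet> b2 \<ge> 0,
  so \<theta> \<bullet> bk \<ge> bk \<bullet> bk forces 2 \<theta> \<bullet> bk = \<theta> \<bullet> \<theta>; hence \<theta> \<bullet> g = 0, while \<theta> \<bullet> g \<ge> g \<bullet> g > 0.\<close>
lemma gap_obtuse_simple_root:
  assumes th: "posroot th" and b1: "posroot b1" and b2: "posroot b2"
    and le: "coord_le (b1 + b2) th" and notR: "b1 + b2 \<notin> R"
  shows "\<exists>i\<in>I. coord (th - b1 - b2) i > 0 \<and> (b1 \<bullet> alpha i < 0 \<or> b2 \<bullet> alpha i < 0)"
proof (rule ccontr)
  assume no_obtuse: "\<not> ?thesis"
  define g where "g = th - b1 - b2"
  have thR: "th \<in> R" and b1R: "b1 \<in> R" and b2R: "b2 \<in> R" using th b1 b2 posroot_in_R by auto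
  have g_nonneg: "\<forall>j\<in>I. coord g j \<ge> 0"
    using le by (auto simp: g_def coord_le_def coord_diff coord_add)
  have "\<forall>i\<in>I. coord g i > 0 \<longrightarrow> alpha i \<bullet> b1 \<ge> 0 \<and> alpha i \<bullet> b2 \<ge> 0"
    using no_obtuse unfolding g_def by (auto simp: inner_commute not_less)
  hence gb1: "g \<bullet> b1 \<ge> 0" and gb2: "g \<bullet> b2 \<ge> 0"
    using inner_nonneg_by_support[OF g_nonneg] by auto
  have b12: "b1 \<bullet> b2 \<ge> 0"
  proof (rule ccontr)
    assume "\<not> b1 \<bullet> b2 \<ge> 0"
    hence "b1 + b2 \<in> R"
      using obtuse_sum_in_R[OF b1R b2R] posroot_not_opposite[OF b2 b1] by simp
    thus False using notR by simp
  qed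
  have "g \<noteq> 0" using notR thR by (auto simp: g_def)
  hence gg: "g \<bullet> g > 0" by simp
  have th_eq: "th = b1 + (b2 + g)" "th = b2 + (b1 + g)" by (simp_all add: g_def)
  have "b1 \<noteq> th"
    using th_eq(1) posroot_plus_nonneg_nonzero[OF b2 g_nonneg] by auto
  moreover have "th \<bullet> b1 \<ge> b1 \<bullet> b1"
    using b12 gb1 by (simp add: th_eq(1) inner_add_left inner_add_right inner_commute)
  ultimately have h1: "2 * (th \<bullet> b1) = th \<bullet> th"
    using large_inner_cartan_one[OF thR b1R] posroot_not_opposite[OF b1 th] by blast
  have "b2 \<noteq> th"
    using th_eq(2) posroot_plus_nonneg_nonzero[OF b1 g_nonneg] by auto
  moreover have "th \<bullet> b2 \<ge> b2 \<bullet> b2"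
    using b12 gb2 by (simp add: th_eq(2) inner_add_left inner_add_right inner_commute)
  ultimately have h2: "2 * (th \<bullet> b2) = th \<bullet> th"
    using large_inner_cartan_one[OF thR b2R] posroot_not_opposite[OF b2 th] by blast
  have "th \<bullet> th = th \<bullet> b1 + th \<bullet> b2 + th \<bullet> g"
    by (subst (2) th_eq(1)) (simp add: inner_add_right)
  hence "th \<bullet> g = 0" using h1 h2 by simp
  moreover have "th \<bullet> g = g \<bullet> b1 + g \<bullet> b2 + g \<bullet> g"
    by (simp add: th_eq(1) inner_add_left inner_add_right inner_commute)
  ultimately show False using gb1 gb2 gg by linarith
qed

lemma raise_below_posroot:
  assumes th: "posroot th" and b1: "posroot b1" and b2: "posroot b2"
    and le: "coord_le (b1 + b2) th" and notR: "b1 + b2 \<notin> R"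
  obtains i where "i \<in> I" "coord_le (b1 + b2 + alpha i) th"
    "posroot (b1 + alpha i) \<or> posroot (b2 + alpha i)"
proof -
  obtain i where i: "i \<in> I" "coord (th - b1 - b2) i > 0"
    and obtuse: "b1 \<bullet> alpha i < 0 \<or> b2 \<bullet> alpha i < 0"
    using gap_obtuse_simple_root[OF th b1 b2 le notR] by blast
  have "lattice (th - (b1 + b2))"
    using b1 b2 th by (intro lattice_diff lattice_add root_lattice posroot_in_R)
  hence "coord_le (b1 + b2 + alpha i) th"
    using coord_le_add_alpha_below[OF le _ i(1)] i(2) by (simp add: diff_diff_add)
  moreover have "posroot (b1 + alpha i) \<or> posroot (b2 + alpha i)"
    using obtuse posroot_add_alpha[OF b1 i(1)] posroot_add_alpha[OF b2 i(1)] by blast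
  ultimately show thesis using that i(1) by blast
qed

lemma sum_below_posroot_lifts:
  assumes th: "posroot th" and b1: "posroot b1" and b2: "posroot b2"
    and le: "coord_le (b1 + b2) th"
  shows "\<exists>c1 c2. posroot c1 \<and> posroot c2 \<and> coord_le b1 c1 \<and> coord_le b2 c2 \<and> c1 + c2 \<in> R"
proof -
  define Q where "Q p \<longleftrightarrow> posroot (fst p) \<and> posroot (snd p) \<and> coord_le (fst p + snd p) th"
    for p :: "'a \<times> 'a"
  define P where "P p \<longleftrightarrow> (\<exists>c1 c2. posroot c1 \<and> posroot c2 \<and> coord_le (fst p) c1
      \<and> coord_le (snd p) c2 \<and> c1 + c2 \<in> R)" for p :: "'a \<times> 'a"
  have "Q (b1, b2)" using b1 b2 le by (simp add: Q_def)
  hence "P (b1, b2)"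
  proof (induction rule: real_measure_induct[where f="\<lambda>p. height (th - fst p - snd p)"])
    case (nonneg p)
    thus ?case
      by (intro height_nonneg) (auto simp: Q_def coord_le_def coord_diff coord_add)
  next
    case (step p)
    obtain x y where p: "p = (x, y)" by fastforce
    have x: "posroot x" and y: "posroot y" and le: "coord_le (x + y) th"
      using step.hyps by (auto simp: Q_def p)
    show ?case
    proof (cases "x + y \<in> R")
      case True
      thus ?thesis using x y coord_le_refl by (auto simp: P_def p)
    next
      case False
      then obtain i where i: "i \<in> I" and raised: "coord_le (x + y + alpha i) th"
        and "posroot (x + alpha i) \<or> posroot (y + alpha i)"
        using raise_below_posroot[OF th x y le] by blast
      hence "Q (x + alpha i, y) \<or> Q (x, y + alpha i)"
        using x y by (auto simp: Q_def add_ac)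
      moreover have "height (th - fst q - snd q) \<le> height (th - x - y) - 1"
        if "q \<in> {(x + alpha i, y), (x, y + alpha i)}" for q
        using that height_alpha[OF i] by (auto simp: height_diff height_add)
      ultimately have "P (x + alpha i, y) \<or> P (x, y + alpha i)"
        using step.IH p by auto
      thus ?thesis
        using coord_le_trans[OF coord_le_add_alpha[OF i]] by (auto simp: P_def p)
    qed
  qed
  thus ?thesis by (simp add: P_def)
qed

definition supported :: "'a \<Rightarrow> nat set \<Rightarrow> bool" where
  "supported x S \<longleftrightarrow> (\<forall>j\<in>I. j \<notin> S \<longrightarrow> coord x j = 0)"

definition orth_split :: "nat set \<Rightarrow> bool" where
  "orth_split S \<longleftrightarrow> (\<forall>s\<in>S. \<forall>t\<in>I - S. alpha s \<bullet> alpha t = 0)"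

lemma supported_alpha: "s \<in> S \<Longrightarrow> s \<in> I \<Longrightarrow> supported (alpha s) S"
  by (auto simp: supported_def coord_alpha)

lemma supported_orth:
  assumes "orth_split S" "supported x S" "supported y (I - S)"
  shows "x \<bullet> y = 0"
proof -
  have "coord x i * (alpha i \<bullet> y) = 0" if i: "i \<in> I" for i
  proof (cases "i \<in> S")
    case False thus ?thesis using assms(2) i by (simp add: supported_def)
  next
    case True
    have "coord y j * (alpha j \<bullet> alpha i) = 0" if j: "j \<in> I" for j
    proof (cases "j \<in> S")
      case True thus ?thesis using assms(3) j by (simp add: supported_def)
    next
      case False
      hence "alpha i \<bullet> alpha j = 0" using assms(1) \<open>i \<in> S\<close> j by (simp add: orth_split_def)
      thus ?thesis by (simp add: inner_commute)
    qed
    hence "y \<bullet> alpha i = 0" unfolding inner_coord[of y] by (simp add: sum.neutral)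
    thus ?thesis by (simp add: inner_commute)
  qed
  thus ?thesis unfolding inner_coord[of x] by (simp add: sum.neutral)
qed

definition proj :: "nat set \<Rightarrow> 'a \<Rightarrow> 'a" where
  "proj S x = lincomb (\<lambda>j. if j \<in> S then coord x j else 0)"

lemma coord_proj: "j \<in> I \<Longrightarrow> coord (proj S x) j = (if j \<in> S then coord x j else 0)"
  unfolding proj_def by (rule coord_eqI) simp_all

lemma proj_decomp: "x = proj S x + proj (I - S) x"
  by (rule vec_eqI) (simp add: coord_add coord_proj)

lemma supported_proj: "supported (proj S x) S"
  by (simp add: supported_def coord_proj)

text \<open>A positive root meeting both sides of an orthogonal splitting has a simple root s on
  the S-side in its support with which it forms an acute angle: b pairs positively with its
  S-part, which is nonzero.\<close>
lemma mixed_posroot_acute: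
  assumes "orth_split S" "posroot b" "s0 \<in> S" "s0 \<in> I" "coord b s0 \<noteq> 0"
  obtains s where "s \<in> S" "s \<in> I" "coord b s > 0" "b \<bullet> alpha s > 0"
proof -
  have "proj S b \<bullet> proj (I - S) b = 0"
    using supported_orth[OF assms(1) supported_proj supported_proj] .
  moreover have "proj S b \<noteq> 0" using assms(3-5) coord_proj[of s0 S b] coord_zero by auto
  ultimately have "proj S b \<bullet> b > 0"
    by (subst (2) proj_decomp[of b S]) (simp add: inner_add_right)
  then obtain s where s: "s \<in> I" "coord (proj S b) s * (alpha s \<bullet> b) > 0"
    by (rule inner_pos_witness)
  have "s \<in> S"
  proof (rule ccontr)
    assume "s \<notin> S"
    hence "coord (proj S b) s = 0" using coord_proj[OF s(1)] by simp
    thus False using s(2) by simp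
  qed
  hence "coord b s * (alpha s \<bullet> b) > 0" using s coord_proj[OF s(1)] by simp
  moreover have "coord b s \<ge> 0" using assms(2) s(1) by (simp add: posroot_def)
  ultimately have "coord b s > 0" "alpha s \<bullet> b > 0" by (simp_all add: zero_less_mult_iff)
  thus thesis using that \<open>s \<in> S\<close> s(1) by (simp add: inner_commute)
qed

text \<open>If b - \<alpha>s is a root on the far side of an orthogonal splitting (s on the near side),
  then b - \<alpha>s is orthogonal to \<alpha>s, so b - 2\<alpha>s is a root; but its coordinates have both
  signs.\<close>
lemma root_string_across_split:
  assumes S: "orth_split S" and s: "s \<in> S" "s \<in> I" and bR: "b \<in> R"
    and c_supp: "supported (b - alpha s) (I - S)"
    and t0: "t0 \<in> I" "coord (b - alpha s) t0 > 0"
  shows False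
proof -
  have st0: "s \<noteq> t0" using c_supp t0 s by (auto simp: supported_def)
  have "alpha s \<bullet> (b - alpha s) = 0"
    by (rule supported_orth[OF S supported_alpha[OF s] c_supp])
  hence refl_R: "b - 2 *\<^sub>R alpha s \<in> R"
    using double_string_in_R[OF alpha_in_R[OF s(2)] bR] by (simp add: inner_diff_right inner_commute)
  have "coord (b - alpha s) s = 0" using c_supp s by (simp add: supported_def)
  hence "coord (b - 2 *\<^sub>R alpha s) s < 0"
    using s(2) by (simp add: coord_diff coord_scale coord_alpha)
  moreover have "coord (b - 2 *\<^sub>R alpha s) t0 > 0"
    using t0 s(2) st0 by (simp add: coord_diff coord_scale coord_alpha)
  ultimately show False using root_sign[OF refl_R] s(2) t0(1) by (meson not_le)
qed

text \<open>By induction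
  on the height: if b meets both sides, subtract an acute simple root of the S-side; by
  induction the result lies on the far side, which is impossible by the previous lemma.\<close>
lemma posroot_supported:
  assumes S: "orth_split S" and b: "posroot b"
  shows "supported b S \<or> supported b (I - S)"
  using b
proof (induction rule: real_measure_induct[where f=height])
  case (nonneg b)
  thus ?case by (simp add: height_nonneg posroot_def)
next
  case (step b)
  show ?case
  proof (rule ccontr)
    assume "\<not> ?case"
    then obtain s0 t0 where s0: "s0 \<in> S" "s0 \<in> I" "coord b s0 \<noteq> 0"
      and t0: "t0 \<in> I" "t0 \<notin> S" "coord b t0 \<noteq> 0"
      by (auto simp: supported_def)
    obtain s where s: "s \<in> S" "s \<in> I" "coord b s > 0" and acute: "b \<bullet> alpha s > 0"
      using mixed_posroot_acute[OF S step.hyps s0] by blast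
    have bR: "b \<in> R" and b_nonneg: "\<forall>j\<in>I. coord b j \<ge> 0"
      using step.hyps by (auto simp: posroot_def)
    have st0: "s \<noteq> t0" using s t0 by auto
    have t0_pos: "coord (b - alpha s) t0 > 0"
      using t0 s(2) st0 b_nonneg by (auto simp: coord_diff coord_alpha less_le)
    have "b \<noteq> alpha s" using t0 st0 coord_alpha[OF t0(1) s(2)] by auto
    hence cR: "b - alpha s \<in> R" using acute_diff_in_R[OF bR alpha_in_R[OF s(2)] acute] by simp
    moreover have "\<not> (\<forall>j\<in>I. coord (b - alpha s) j \<le> 0)" using t0_pos t0(1) by force
    ultimately have "posroot (b - alpha s)"
      using root_sign[OF cR] unfolding posroot_def by blast
    moreover have "height (b - alpha s) \<le> height b - 1"
      using height_diff height_alpha[OF s(2)] by simp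
    ultimately have "supported (b - alpha s) S \<or> supported (b - alpha s) (I - S)"
      using step.IH by blast
    hence "supported (b - alpha s) (I - S)"
      using t0_pos t0 by (auto simp: supported_def)
    thus False using root_string_across_split[OF S s(1,2) bR] t0_pos t0(1) by blast
  qed
qed

lemma supported_uminus: "supported (- x) S \<longleftrightarrow> supported x S"
  by (simp add: supported_def coord_minus)

lemma root_supported:
  assumes "orth_split S" "b \<in> R"
  shows "supported b S \<or> supported b (I - S)"
proof (cases "posroot b")
  case True thus ?thesis by (rule posroot_supported[OF assms(1)])
next
  case False
  hence "posroot (- b)" using posroot_or_negroot[OF assms(2)] by blast
  thus ?thesis using posroot_supported[OF assms(1), of "- b"] by (simp add: supported_uminus)
qed

end

locale irreducible_based_root_system = based_root_system +
  assumes irreducible: "irreducible_root_system R"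
begin

text \<open>Irreducibility, read on the simple roots: there is no orthogonal splitting of the simple
  roots with both sides nonempty, since it would split R into two orthogonal parts.\<close>
lemma orth_split_trivial:
  assumes S: "orth_split S" and s: "s \<in> S" "s \<in> I" and t: "t \<in> I" "t \<notin> S"
  shows False
proof -
  define R1 where "R1 = {b \<in> R. supported b S}"
  define R2 where "R2 = R - R1"
  have "R = R1 \<union> R2" by (auto simp: R1_def R2_def)
  moreover have "alpha s \<in> R1"
    using supported_alpha[OF s] alpha_in_R[OF s(2)] by (simp add: R1_def)
  moreover have "alpha t \<in> R2"
    using t alpha_in_R[OF t(1)] coord_alpha[OF t(1) t(1)] by (auto simp: R1_def R2_def supported_def)
  moreover have "\<forall>a\<in>R1. \<forall>b\<in>R2. a \<bullet> b = 0"
  proof (intro ballI)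
    fix a b assume "a \<in> R1" "b \<in> R2"
    hence "supported a S" "supported b (I - S)"
      using root_supported[OF S] by (auto simp: R1_def R2_def)
    thus "a \<bullet> b = 0" by (rule supported_orth[OF S])
  qed
  ultimately show False using irreducible unfolding irreducible_root_system_def by blast
qed

definition dominant :: "'a \<Rightarrow> bool" where
  "dominant x \<longleftrightarrow> (\<forall>i\<in>I. x \<bullet> alpha i \<ge> 0)"

text \<open>For a dominant vector with nonnegative coordinates, its support splits the simple roots
  orthogonally: for t outside the support, x \<bullet> \<alpha>t \<ge> 0 is a sum of nonpositive terms,
  so every simple root in the support is orthogonal to \<alpha>t.\<close>
lemma dominant_support_orth_split:
  assumes nonneg: "\<forall>j\<in>I. coord x j \<ge> 0" and dom: "dominant x"
  shows "orth_split {j \<in> I. coord x j > 0}" (is "orth_split ?S")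
  unfolding orth_split_def
proof (intro ballI)
  fix s t assume s: "s \<in> ?S" and t: "t \<in> I - ?S"
  have terms: "coord x i * (alpha i \<bullet> alpha t) \<le> 0" if i: "i \<in> I" for i
  proof (cases "i \<in> ?S")
    case True
    hence "alpha i \<bullet> alpha t \<le> 0" using simple_inner_nonpos i t by blast
    thus ?thesis using True by (simp add: mult_nonneg_nonpos)
  next
    case False hence "coord x i = 0" using nonneg i by force
    thus ?thesis by simp
  qed
  have "x \<bullet> alpha t = (\<Sum>i\<in>I. coord x i * (alpha i \<bullet> alpha t))" by (rule inner_coord)
  moreover have "x \<bullet> alpha t \<ge> 0" using dom t by (simp add: dominant_def)
  ultimately have "(\<Sum>i\<in>I. - (coord x i * (alpha i \<bullet> alpha t))) = 0"
    using sum_nonpos[of I "\<lambda>i. coord x i * (alpha i \<bullet> alpha t)"] terms by (simp add: sum_negf)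
  hence "\<forall>i\<in>I. - (coord x i * (alpha i \<bullet> alpha t)) = 0"
    using sum_nonneg_eq_0_iff[of I "\<lambda>i. - (coord x i * (alpha i \<bullet> alpha t))"] terms by simp
  hence "- (coord x s * (alpha s \<bullet> alpha t)) = 0" using s by blast
  moreover have "coord x s > 0" using s by simp
  ultimately show "alpha s \<bullet> alpha t = 0" by simp
qed

lemma dominant_full_support:
  assumes x: "posroot x" and dom: "dominant x"
  shows "\<forall>j\<in>I. coord x j > 0"
proof (rule ccontr)
  assume "\<not> (\<forall>j\<in>I. coord x j > 0)"
  then obtain t where t: "t \<in> I" "\<not> coord x t > 0" by blast
  obtain s where s: "s \<in> I" "coord x s \<noteq> 0" using coord_nonzero[OF posroot_nonzero[OF x]] by blast
  have nonneg: "\<forall>j\<in>I. coord x j \<ge> 0" using x by (simp add: posroot_def)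
  hence "coord x s > 0" using s by force
  thus False
    using orth_split_trivial[OF dominant_support_orth_split[OF nonneg dom]] s t by blast
qed

lemma full_dominant_inner_pos:
  assumes full: "\<forall>j\<in>I. coord x j > 0" and dom: "dominant y" and "y \<noteq> 0"
  shows "x \<bullet> y > 0"
proof -
  have "y \<bullet> y > 0" using \<open>y \<noteq> 0\<close> by simp
  then obtain j where j: "j \<in> I" "coord y j * (alpha j \<bullet> y) > 0" by (rule inner_pos_witness)
  have nonneg: "alpha i \<bullet> y \<ge> 0" if "i \<in> I" for i
    using dom that by (simp add: dominant_def inner_commute)
  hence "alpha j \<bullet> y > 0" using j by (metis less_eq_real_def mult_zero_right)
  hence "coord x j * (alpha j \<bullet> y) > 0" using full j(1) by simp
  also have "\<dots> \<le> (\<Sum>i\<in>I. coord x i * (alpha i \<bullet> y))"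
  proof (rule member_le_sum)
    fix i assume "i \<in> I - {j}"
    thus "coord x i * (alpha i \<bullet> y) \<ge> 0" using full nonneg by (simp add: less_imp_le)
  qed (use j(1) in simp_all)
  finally show ?thesis by (simp only: inner_coord[of x y])
qed

definition locally_highest :: "'a \<Rightarrow> bool" where
  "locally_highest m \<longleftrightarrow> posroot m \<and> (\<forall>x. posroot x \<longrightarrow> coord_le m x \<longrightarrow> height x \<le> height m)"

text \<open>A locally highest root is dominant: otherwise adding an obtuse simple root raises it.\<close>
lemma locally_highest_dominant:
  assumes m: "locally_highest m"
  shows "dominant m"
  unfolding dominant_def
proof (intro ballI, rule ccontr)
  fix i assume i: "i \<in> I" and "\<not> m \<bullet> alpha i \<ge> 0"
  hence "posroot (m + alpha i)" using posroot_add_alpha[of m i] m by (simp add: locally_highest_def)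
  hence "height (m + alpha i) \<le> height m"
    using m coord_le_add_alpha[OF i] by (simp add: locally_highest_def)
  thus False using height_add height_alpha[OF i] by simp
qed

text \<open>In an irreducible root system there is only one locally highest root: two of them are
  dominant with full support, hence acute, so their difference is a root, and whichever sign it
  has contradicts the local maximality of one of them.\<close>
lemma locally_highest_unique:
  assumes x: "locally_highest x" and y: "locally_highest y"
  shows "x = y"
proof (rule ccontr)
  assume ne: "x \<noteq> y"
  have px: "posroot x" and py: "posroot y" using x y by (simp_all add: locally_highest_def)
  have "x \<bullet> y > 0"
    using full_dominant_inner_pos[OF dominant_full_support[OF px locally_highest_dominant[OF x]]
        locally_highest_dominant[OF y] posroot_nonzero[OF py]] .
  hence dR: "x - y \<in> R" using acute_diff_in_R[OF posroot_in_R[OF px] posroot_in_R[OF py]] ne by simp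
  from root_sign[OF dR] show False
  proof
    assume "\<forall>j\<in>I. coord (x - y) j \<ge> 0"
    hence "coord_le y x" "height (x - y) > 0"
      using ne height_pos[of "x - y"] by (auto simp: coord_le_def coord_diff)
    thus False using y px by (auto simp: locally_highest_def height_diff)
  next
    assume "\<forall>j\<in>I. coord (x - y) j \<le> 0"
    hence "coord_le x y" "height (y - x) > 0"
      using ne height_pos[of "y - x"] by (auto simp: coord_le_def coord_diff)
    thus False using x py by (auto simp: locally_highest_def height_diff)
  qed
qed

lemma exists_max_height:
  assumes "finite X" "X \<noteq> {}"
  obtains m where "m \<in> X" "\<And>x. x \<in> X \<Longrightarrow> height x \<le> height m"
proof -
  have "Max (height ` X) \<in> height ` X" using assms by simp
  then obtain m where "m \<in> X" "height m = Max (height ` X)" by auto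
  thus thesis using that assms by simp
qed

text \<open>The highest root: a root of maximal height dominates every positive root, because
  a root of maximal height above a given positive root is locally highest as well.\<close>
lemma highest_posroot_exists: "\<exists>th. posroot th \<and> (\<forall>b. posroot b \<longrightarrow> coord_le b th)"
proof -
  have "posroot (alpha 1)" using posroot_alpha n_def by simp
  hence "finite {x. posroot x}" "{x. posroot x} \<noteq> {}"
    using finite_subset[OF _ finite_R] by (auto simp: posroot_def)
  then obtain th where th: "posroot th" and th_max: "\<And>x. posroot x \<Longrightarrow> height x \<le> height th"
    by (rule exists_max_height) auto
  have th_loc: "locally_highest th" using th th_max by (simp add: locally_highest_def)
  have th_top: "coord_le b th" if b: "posroot b" for b
  proof -
    let ?X = "{x. posroot x \<and> coord_le b x}"
    have "finite ?X" "?X \<noteq> {}"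
      using finite_subset[OF _ finite_R] b coord_le_refl by (auto simp: posroot_def)
    then obtain m where m: "posroot m" "coord_le b m"
      and m_max: "\<And>x. posroot x \<Longrightarrow> coord_le b x \<Longrightarrow> height x \<le> height m"
      by (rule exists_max_height) auto
    have "locally_highest m"
      using m m_max coord_le_trans[OF m(2)] by (simp add: locally_highest_def)
    thus ?thesis using locally_highest_unique[OF _ th_loc] m(2) by simp
  qed
  thus ?thesis using th by blast
qed

abbreviation theta :: 'a where
  "theta \<equiv> highest_root R n alpha"

lemma theta_highest: "posroot theta" "posroot b \<Longrightarrow> coord_le b theta"
proof -
  obtain th where th: "posroot th" and th_max: "\<And>b. posroot b \<Longrightarrow> coord_le b th"
    using highest_posroot_exists by blast
  have thR: "th \<in> R" using th by (simp add: posroot_def)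
  have "theta = th"
    unfolding highest_root_def
  proof (rule the_equality)
    show "th \<in> pos_roots R n alpha \<and> (\<forall>b\<in>pos_roots R n alpha. rle n alpha b th)"
      using th th_max thR by (auto simp: pos_roots_iff rle_iff root_lattice posroot_def)
  next
    fix t assume t: "t \<in> pos_roots R n alpha \<and> (\<forall>b\<in>pos_roots R n alpha. rle n alpha b t)"
    hence "posroot t" "coord_le th t"
      using th thR by (auto simp: pos_roots_iff rle_iff root_lattice posroot_def)
    thus "t = th" using th_max by (intro vec_eqI) (auto simp: coord_le_def intro: order_antisym)
  qed
  thus "posroot theta" "posroot b \<Longrightarrow> coord_le b theta" using th th_max by simp_all
qed

text \<open>If a + b \<le> \<theta>, raising a and b gives two roots of the upper
  closure summing to a root; conversely a root b1 + b2 with b1, b2 in the upper closure is a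
  positive root, hence below \<theta>, and lies above a sum of two elements of A.\<close>
lemma abelian_iff_no_sum_below_theta:
  assumes "J_antichain R n alpha J A"
  shows "abelian_J_antichain R n alpha J A \<longleftrightarrow> (\<forall>a\<in>A. \<forall>b\<in>A. \<not> coord_le (a + b) theta)"
proof -
  have A: "\<And>a. a \<in> A \<Longrightarrow> posroot a"
    using assms unfolding J_antichain_def by (auto simp: pos_roots_iff)
  have upper: "c \<in> upper_closure R n alpha A \<longleftrightarrow> posroot c \<and> (\<exists>a\<in>A. coord_le a c)" for c
    unfolding upper_closure_def pos_roots_iff
    using rle_iff root_lattice A posroot_in_R by blast
  show ?thesis
  proof
    assume "abelian_J_antichain R n alpha J A"
    hence closed: "\<And>c1 c2. c1 \<in> upper_closure R n alpha A \<Longrightarrow> c2 \<in> upper_closure R n alpha A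
        \<Longrightarrow> c1 + c2 \<notin> R"
      unfolding abelian_J_antichain_def by blast
    show "\<forall>a\<in>A. \<forall>b\<in>A. \<not> coord_le (a + b) theta"
    proof (intro ballI notI)
      fix a b assume ab: "a \<in> A" "b \<in> A" and "coord_le (a + b) theta"
      then obtain c1 c2 where "posroot c1" "posroot c2" "coord_le a c1" "coord_le b c2" "c1 + c2 \<in> R"
        using sum_below_posroot_lifts[OF theta_highest(1) A A] by blast
      thus False using closed upper ab by blast
    qed
  next
    assume no_sum: "\<forall>a\<in>A. \<forall>b\<in>A. \<not> coord_le (a + b) theta"
    have "c1 + c2 \<notin> R"
      if c1: "c1 \<in> upper_closure R n alpha A" and c2: "c2 \<in> upper_closure R n alpha A" for c1 c2
    proof
      assume sR: "c1 + c2 \<in> R"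
      obtain a1 a2 where a: "a1 \<in> A" "a2 \<in> A" "coord_le a1 c1" "coord_le a2 c2"
        and pos: "posroot c1" "posroot c2" using c1 c2 upper by blast
      have "coord_le (c1 + c2) theta" using theta_highest(2) posroot_add[OF pos sR] by blast
      hence "coord_le (a1 + a2) theta" using coord_le_trans coord_le_add a(3,4) by blast
      thus False using no_sum a(1,2) by blast
    qed
    thus "abelian_J_antichain R n alpha J A"
      unfolding abelian_J_antichain_def using assms by blast
  qed
qed

end

lemma ball_pairs_split:
  "(\<forall>a\<in>A. \<forall>b\<in>A. P a b) \<longleftrightarrow> (\<forall>a\<in>A. \<forall>b\<in>A. a \<noteq> b \<longrightarrow> P a b) \<and> (\<forall>a\<in>A. P a a)"
  by metis

theorem proposition1p6:
  fixes R :: "'a::euclidean_space set" and alpha :: "nat \<Rightarrow> 'a"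
    and n :: nat and J :: "nat set" and A :: "'a set"
  assumes "n = DIM('a)"
    and "irreducible_root_system R"
    and "simple_roots R n alpha"
    and "J \<subseteq> {1..n}"
    and "J_antichain R n alpha J A"
  shows "abelian_J_antichain R n alpha J A \<longleftrightarrow>
    ((\<forall>a\<in>A. \<forall>b\<in>A. a \<noteq> b \<longrightarrow>
        (\<exists>i\<in>{1..n}. dcoef n alpha i a + dcoef n alpha i b > dcoef n alpha i (highest_root R n alpha))) \<and>
     (\<forall>a\<in>A. \<exists>i\<in>{1..n}. 2 * dcoef n alpha i a > dcoef n alpha i (highest_root R n alpha)))"
proof -
  have "root_system R" using assms(2) by (simp add: irreducible_root_system_def)
  then interpret irreducible_based_root_system R alpha n
    by unfold_locales (use assms(1-3) in auto)
  have lattice_A: "\<And>a. a \<in> A \<Longrightarrow> lattice a"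
    using assms(5) root_lattice unfolding J_antichain_def pos_roots_def by blast
  have lattice_theta: "lattice theta" using theta_highest(1) root_lattice posroot_in_R by blast
  have "abelian_J_antichain R n alpha J A \<longleftrightarrow> (\<forall>a\<in>A. \<forall>b\<in>A. \<not> coord_le (a + b) theta)"
    by (rule abelian_iff_no_sum_below_theta[OF assms(5)])
  also have "\<dots> \<longleftrightarrow> (\<forall>a\<in>A. \<forall>b\<in>A.
      \<exists>i\<in>I. dcoef n alpha i a + dcoef n alpha i b > dcoef n alpha i theta)"
  proof -
    have "\<not> coord_le (a + b) theta \<longleftrightarrow>
        (\<exists>i\<in>I. dcoef n alpha i a + dcoef n alpha i b > dcoef n alpha i theta)"
      if "a \<in> A" "b \<in> A" for a b
      using dcoef_sum_exceeds_iff[OF lattice_A[OF that(1)] lattice_A[OF that(2)] lattice_theta]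
      by simp
    thus ?thesis by blast
  qed
  also have "\<dots> \<longleftrightarrow> (\<forall>a\<in>A. \<forall>b\<in>A. a \<noteq> b \<longrightarrow>
        (\<exists>i\<in>I. dcoef n alpha i a + dcoef n alpha i b > dcoef n alpha i theta)) \<and>
     (\<forall>a\<in>A. \<exists>i\<in>I. 2 * dcoef n alpha i a > dcoef n alpha i theta)"
    unfolding mult_2 by (rule ball_pairs_split)
  finally show ?thesis .
qed

end
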